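(* Let $L$ be a friendly labeling function, $T$ a tree with root edge, and $e$ an interior edge of $T$. Let $$g=\prod_{i=1}^d q_{(l_i,m_i)}-\prod_{i=1}^d q_{(l'_i,m_i)}\in I_{T_{e,-},L},$$ where $(l_i,m_i),(l'_i,m_i)\in{\rm im}(L^{T_{e,-}})$ and $m_i$ denotes the label on $e$. Let $n_1,\dots,n_d$ be labelings of the edges of $T_{e,+}$ other than $e$ such that $(m_i,n_i)\in{\rm im}(L^{T_{e,+}})$ for each $i$. Then $(l_i,m_i,n_i),(l'_i,m_i,n_i)\in{\rm im}(L^T)$ for all $i$, and $$g^*=\prod_{i=1}^d q_{(l_i,m_i,n_i)}-\prod_{i=1}^d q_{(l'_i,m_i,n_i)}$$ lies in $I_{T,L}$. The analogous statement holds with the roles of $T_{e,-}$ and $T_{e,+}$ exchanged.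
   Context: Let $G$ be a finite abelian group written additively, $\mathcal{L}$ a finite set, $L:G\to\mathcal{L}$ a function. A tree with root edge is a finite tree $T$ with a distinguished leaf $\rho$; the edge at $\rho$ is the root edge. Every vertex $v\neq\rho$ has a unique parent edge (first edge on the path from $v$ to $\rho$); other edges at $v$ are child edges. Vertices that are neither $\rho$ nor leaves are interior vertices; an edge is interior if both endpoints are interior vertices. $E(T)$ is the edge set. An edge $e'$ is below $e$ if $e$ lies on the path from $\rho$ to $e'$ (so $e$ is below itself). A map $h:E(T)\to G$ is a consistent assignment if for every interior vertex $v$, $h(\text{parent edge of }v)=\sum h(\text{child edges of }v)$. ${\rm im}(L^T)=\{L\circ h: h\text{ consistent}\}$ is the set of consistent labelings. $I_{T,L}$ is the kernel of $\mathbb{C}[q_\lambda:\lambda\in{\rm im}(L^T)]\to\mathbb{C}[a^{(e)}_l:e\in E(T),l\in\mathcal{L}]$, $q_\lambda\mapsto\prod_{e\in E(T)}a^{(e)}_{\lambda(e)}$; the same definitions apply to any tree with root edge. For an edge $e$, $T_{e,-}$ is the tree formed by all edges below $e$, regarded as a tree with root edge $e$ (distinguished leaf = endpoint of $e$ closer to $\rho$); $T_{e,+}$ is the tree formed by $e$ and all edges not below $e$, with the same $\rho$ (the endpoint of $e$ farther from $\rho$ becomes a leaf). Labelings of $T_{e,-}$ are written $(l,m)$ and of $T_{e,+}$ as $(m,n)$, and of $T$ as $(l,m,n)$, where $l$ is the restriction to edges of $T_{e,-}$ other than $e$, $m$ the value on $e$, $n$ the restriction to edges of $T_{e,+}$ other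 than $e$. Friendliness: for $m\ge3$ let $Z_m=\{(g_1,\dots,g_m)\in G^m: g_1+\cdots+g_{m-1}=g_m\}$ and $\widetilde{L}(g_1,\dots,g_m)=(L(g_1),\dots,L(g_m))$; $L$ is $m$-friendly if for every $l\in\widetilde{L}(Z_m)$ and every $i$, the set of $i$-th coordinates of elements of $\widetilde{L}^{-1}(l)$ equals $L^{-1}(l_i)$; $L$ is friendly if it is $m$-friendly for all $m\ge3$. *)

theory Defs
  imports Complex_Main "HOL-Library.Multiset" "HOL-Library.FuncSet"
begin

definition verts :: "'v set set \<Rightarrow> 'v set" where
  "verts E = \<Union>E"

definition graph_edges :: "'v set set \<Rightarrow> bool" where
  "graph_edges E \<longleftrightarrow> finite E \<and> (\<forall>e\<in>E. card e = 2)"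

definition is_path :: "'v set set \<Rightarrow> 'v list \<Rightarrow> bool" where
  "is_path E ps \<longleftrightarrow> ps \<noteq> [] \<and> distinct ps \<and> set ps \<subseteq> verts E \<and>
     (\<forall>i. Suc i < length ps \<longrightarrow> {ps ! i, ps ! Suc i} \<in> E)"

definition path_edges :: "'v list \<Rightarrow> 'v set set" where
  "path_edges ps = {{ps ! i, ps ! Suc i} | i. Suc i < length ps}"

definition connected_graph :: "'v set set \<Rightarrow> bool" where
  "connected_graph E \<longleftrightarrow> (\<forall>u\<in>verts E. \<forall>v\<in>verts E.
     \<exists>ps. is_path E ps \<and> hd ps = u \<and> last ps = v)"

definition acyclic_graph :: "'v set set \<Rightarrow> bool" where
  "acyclic_graph E \<longleftrightarrow> \<not> (\<exists>ps. is_path E ps \<and> length ps \<ge> 3 \<and> {last ps, hd ps} \<in> E)"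

definition is_tree :: "'v set set \<Rightarrow> bool" where
  "is_tree E \<longleftrightarrow> graph_edges E \<and> E \<noteq> {} \<and> connected_graph E \<and> acyclic_graph E"

definition degree :: "'v set set \<Rightarrow> 'v \<Rightarrow> nat" where
  "degree E v = card {e\<in>E. v \<in> e}"

definition leaf :: "'v set set \<Rightarrow> 'v \<Rightarrow> bool" where
  "leaf E v \<longleftrightarrow> v \<in> verts E \<and> degree E v = 1"

text \<open>A tree with root edge: a tree with a distinguished leaf \<open>\<rho>\<close>.\<close>
definition rooted_tree :: "'v set set \<Rightarrow> 'v \<Rightarrow> bool" where
  "rooted_tree E \<rho> \<longleftrightarrow> is_tree E \<and> leaf E \<rho>"

definition interior_vertex :: "'v set set \<Rightarrow> 'v \<Rightarrow> 'v \<Rightarrow> bool" where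
  "interior_vertex E \<rho> v \<longleftrightarrow> v \<in> verts E \<and> v \<noteq> \<rho> \<and> \<not> leaf E v"

definition interior_edge :: "'v set set \<Rightarrow> 'v \<Rightarrow> 'v set \<Rightarrow> bool" where
  "interior_edge E \<rho> e \<longleftrightarrow> e \<in> E \<and> (\<forall>v\<in>e. interior_vertex E \<rho> v)"

definition parent_edge :: "'v set set \<Rightarrow> 'v \<Rightarrow> 'v \<Rightarrow> 'v set" where
  "parent_edge E \<rho> v = (THE e. \<exists>ps. is_path E ps \<and> hd ps = v \<and> last ps = \<rho> \<and>
       length ps \<ge> 2 \<and> e = {ps ! 0, ps ! 1})"

definition child_edges :: "'v set set \<Rightarrow> 'v \<Rightarrow> 'v \<Rightarrow> 'v set set" where
  "child_edges E \<rho> v = {e\<in>E. v \<in> e \<and> e \<noteq> parent_edge E \<rho> v}"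

definition below :: "'v set set \<Rightarrow> 'v \<Rightarrow> 'v set \<Rightarrow> 'v set \<Rightarrow> bool" where
  "below E \<rho> e e' \<longleftrightarrow> (\<exists>ps. is_path E ps \<and> hd ps = \<rho> \<and> length ps \<ge> 2 \<and>
       {ps ! (length ps - 2), last ps} = e' \<and> e \<in> path_edges ps)"

definition consistent :: "'v set set \<Rightarrow> 'v \<Rightarrow> ('v set \<Rightarrow> 'g::ab_group_add) \<Rightarrow> bool" where
  "consistent E \<rho> h \<longleftrightarrow> (\<forall>v. interior_vertex E \<rho> v \<longrightarrow>
       h (parent_edge E \<rho> v) = (\<Sum>c\<in>child_edges E \<rho> v. h c))"

text \<open>\<open>im(L^T)\<close>: labelings are functions on the edge set (extensional).\<close>
definition im_lab :: "'v set set \<Rightarrow> 'v \<Rightarrow> ('g::ab_group_add \<Rightarrow> 'l) \<Rightarrow> ('v set \<Rightarrow> 'l) set" where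
  "im_lab E \<rho> L = {restrict (L \<circ> h) E | h. consistent E \<rho> h}"

definition T_minus :: "'v set set \<Rightarrow> 'v \<Rightarrow> 'v set \<Rightarrow> 'v set set" where
  "T_minus E \<rho> e = {e'\<in>E. below E \<rho> e e'}"

text \<open>Endpoint of \<open>e\<close> closer to \<open>\<rho>\<close> (the root leaf of \<open>T_{e,-}\<close>).\<close>
definition near_end :: "'v set set \<Rightarrow> 'v \<Rightarrow> 'v set \<Rightarrow> 'v" where
  "near_end E \<rho> e = (THE u. u \<in> e \<and>
      (\<exists>ps. is_path E ps \<and> hd ps = \<rho> \<and> last ps = u \<and> e \<notin> path_edges ps))"

definition T_plus :: "'v set set \<Rightarrow> 'v \<Rightarrow> 'v set \<Rightarrow> 'v set set" where
  "T_plus E \<rho> e = insert e (E - T_minus E \<rho> e)"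

text \<open>The labeling \<open>(l,m,n)\<close> of \<open>T\<close> glued from \<open>(l,m)\<close> on \<open>T_{e,-}\<close> and \<open>(m,n)\<close> on \<open>T_{e,+}\<close>.\<close>
definition glue :: "'v set set \<Rightarrow> 'v set set \<Rightarrow> ('v set \<Rightarrow> 'l) \<Rightarrow> ('v set \<Rightarrow> 'l) \<Rightarrow> ('v set \<Rightarrow> 'l)" where
  "glue E Em lm mn = restrict (\<lambda>x. if x \<in> Em then lm x else mn x) E"

definition Zm :: "nat \<Rightarrow> 'g::ab_group_add list set" where
  "Zm m = {gs. length gs = m \<and> sum_list (butlast gs) = last gs}"

definition m_friendly :: "nat \<Rightarrow> ('g::ab_group_add \<Rightarrow> 'l) \<Rightarrow> bool" where
  "m_friendly m L \<longleftrightarrow> (\<forall>l \<in> map L ` Zm m. \<forall>i<m.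
      {gs ! i | gs. gs \<in> Zm m \<and> map L gs = l} = L -` {l ! i})"

definition friendly :: "('g::ab_group_add \<Rightarrow> 'l) \<Rightarrow> bool" where
  "friendly L \<longleftrightarrow> (\<forall>m\<ge>3. m_friendly m L)"

text \<open>Polynomials in the variables \<open>q_\<lambda>\<close> are finitely supported coefficient functions on
  monomials; a monomial is a multiset of variables (labelings).  The ring map
  \<open>q_\<lambda> \<mapsto> \<Prod>_e a^(e)_{\<lambda>(e)}\<close> sends the monomial \<open>\<alpha>\<close> to the monomial in the variables
  \<open>a^(e)_l\<close> (encoded as pairs \<open>(e,l)\<close>) given by \<open>mono_img\<close>; a polynomial is in the kernel
  iff for every target monomial the coefficients mapping to it sum to zero.\<close>

definition mono_img :: "'v set set \<Rightarrow> ('v set \<Rightarrow> 'l) multiset \<Rightarrow> ('v set \<times> 'l) multiset" where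
  "mono_img E \<alpha> = sum_mset (image_mset (\<lambda>lab. mset_set ((\<lambda>x. (x, lab x)) ` E)) \<alpha>)"

definition toric_ideal :: "'v set set \<Rightarrow> 'v \<Rightarrow> ('g::ab_group_add \<Rightarrow> 'l)
    \<Rightarrow> (('v set \<Rightarrow> 'l) multiset \<Rightarrow> complex) set" where
  "toric_ideal E \<rho> L = {p. finite {\<alpha>. p \<alpha> \<noteq> 0} \<and>
      (\<forall>\<alpha>. p \<alpha> \<noteq> 0 \<longrightarrow> set_mset \<alpha> \<subseteq> im_lab E \<rho> L) \<and>
      (\<forall>\<beta>. (\<Sum>\<alpha>\<in>{\<alpha>. p \<alpha> \<noteq> 0 \<and> mono_img E \<alpha> = \<beta>}. p \<alpha>) = 0)}"

definition binom :: "nat \<Rightarrow> (nat \<Rightarrow> 'a) \<Rightarrow> (nat \<Rightarrow> 'a) \<Rightarrow> ('a multiset \<Rightarrow> complex)" where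
  "binom d A B = (\<lambda>\<alpha>. (if \<alpha> = mset (map A [0..<d]) then 1 else 0)
                    - (if \<alpha> = mset (map B [0..<d]) then 1 else 0))"

end

theory Submission
  imports Defs
begin

text \<open>Every edge of the rooted tree is \<open>{y, parent y}\<close> for a unique vertex \<open>y \<noteq> \<rho>\<close>, and for
  \<open>e = {w, parent w}\<close> the tree \<open>T_{e,-}\<close> consists of the parent edges of the descendants of \<open>w\<close>.
  Consistency at a vertex involves only the edges at that vertex, so consistent assignments of
  \<open>T_{e,-}\<close> and \<open>T_{e,+}\<close> combine to one of \<open>T\<close> as soon as they take the same value on \<open>e\<close>.
  Equal labels on \<open>e\<close> suffice: by friendliness, the value on the parent edge of an interior vertex
  may be replaced by any element with the same label if the values on the child edges are
  re-chosen, with unchanged labels, to have the new sum; propagating such a change from \<open>e\<close> down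
  \<open>T_{e,-}\<close> alters the assignment of \<open>T_{e,-}\<close> but not its labeling.  Finally, the image of a
  glued monomial under \<open>q_\<lambda> \<mapsto> \<Prod>_e a^(e)_{\<lambda>(e)}\<close> is the product of the images of its
  restrictions to the two parts, so a binomial relation on either part carries over to \<open>T\<close>.\<close>

section \<open>Paths\<close>

lemma is_path_Cons_Cons_iff:
  "is_path E (a # b # ps) \<longleftrightarrow> {a, b} \<in> E \<and> a \<notin> set (b # ps) \<and> a \<in> verts E \<and> is_path E (b # ps)"
proof
  assume H: "is_path E (a # b # ps)"
  have "{a, b} \<in> E" using H unfolding is_path_def by fastforce
  moreover have "{(b # ps) ! i, (b # ps) ! Suc i} \<in> E" if "Suc i < length (b # ps)" for i
    using H that unfolding is_path_def by fastforce
  ultimately show "{a, b} \<in> E \<and> a \<notin> set (b # ps) \<and> a \<in> verts E \<and> is_path E (b # ps)"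
    using H unfolding is_path_def by auto
next
  assume H: "{a, b} \<in> E \<and> a \<notin> set (b # ps) \<and> a \<in> verts E \<and> is_path E (b # ps)"
  have "{(a # b # ps) ! i, (a # b # ps) ! Suc i} \<in> E" if "Suc i < length (a # b # ps)" for i
    using H that unfolding is_path_def by (cases i) auto
  then show "is_path E (a # b # ps)"
    using H unfolding is_path_def by auto
qed

lemma is_path_take: "is_path E ps \<Longrightarrow> 0 < n \<Longrightarrow> is_path E (take n ps)"
  unfolding is_path_def by (auto dest: in_set_takeD)

lemma is_path_drop: "is_path E ps \<Longrightarrow> n < length ps \<Longrightarrow> is_path E (drop n ps)"
  unfolding is_path_def by (auto dest: in_set_dropD)

lemma rev_nth_Suc_pair:
  assumes "Suc i < length ps"
  shows "{rev ps ! i, rev ps ! Suc i}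
      = {ps ! (length ps - Suc (Suc i)), ps ! Suc (length ps - Suc (Suc i))}"
  using assms by (auto simp: rev_nth Suc_diff_Suc)

lemma is_path_rev: "is_path E (rev ps) \<longleftrightarrow> is_path E ps"
proof -
  have "is_path E (rev qs)" if "is_path E qs" for qs
    using that rev_nth_Suc_pair[of _ qs] unfolding is_path_def
    by (auto simp: insert_commute)
  then show ?thesis by fastforce
qed

lemma path_edges_rev: "path_edges (rev ps) = path_edges ps"
proof -
  have sub: "path_edges (rev qs) \<subseteq> path_edges qs" for qs :: "'a list"
    using rev_nth_Suc_pair[of _ qs] unfolding path_edges_def
    by (fastforce simp: insert_commute)
  show ?thesis using sub[of ps] sub[of "rev ps"] by simp
qed

lemma distinct_Cons_last_eq:
  assumes "distinct (a # q)" "last (a # q) = a"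
  shows "q = []"
proof (rule ccontr)
  assume "q \<noteq> []"
  then have "last q \<in> set q" "last (a # q) = last q" by simp_all
  then show False using assms by simp
qed

lemma acyclic_path_no_chord:
  assumes "acyclic_graph E" "is_path E (a # q)" "{a, x} \<in> E" "x \<in> set q"
  shows "x = hd q"
proof (rule ccontr)
  assume "x \<noteq> hd q"
  obtain q1 q2 where q: "q = q1 @ x # q2" using assms(4) by (meson split_list)
  then obtain y q1' where q1: "q1 = y # q1'" using \<open>x \<noteq> hd q\<close> by (cases q1) auto
  have "take (length q1 + 2) (a # q) = a # q1 @ [x]" using q by simp
  then have "is_path E (a # q1 @ [x])"
    using is_path_take[OF assms(2), of "length q1 + 2"] by simp
  moreover have "3 \<le> length (a # q1 @ [x])" using q1 by simp
  moreover have "{last (a # q1 @ [x]), hd (a # q1 @ [x])} \<in> E"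
    using assms(3) by (simp add: insert_commute)
  ultimately show False using assms(1) unfolding acyclic_graph_def by blast
qed

lemma acyclic_path_unique:
  assumes "acyclic_graph E"
  shows "is_path E p \<Longrightarrow> is_path E q \<Longrightarrow> hd p = hd q \<Longrightarrow> last p = last q \<Longrightarrow> p = q"
proof (induction p arbitrary: q)
  case Nil
  then show ?case by (simp add: is_path_def)
next
  case (Cons a p')
  obtain q' where q: "q = a # q'"
    using Cons.prems(2,3) by (cases q) (auto simp: is_path_def)
  have "distinct q" using Cons.prems(2) unfolding is_path_def by blast
  have a_notin: "a \<notin> set p'"
    using Cons.prems(1) unfolding is_path_def by auto
  show ?case
  proof (cases p')
    case Nil
    then have "last (a # q') = a" using Cons.prems(4) q by simp
    moreover have "distinct (a # q')" using \<open>distinct q\<close> q by simp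
    ultimately have "q' = []" by (rule distinct_Cons_last_eq[rotated])
    then show ?thesis using Nil q by simp
  next
    case (Cons x p'')
    have "{a, x} \<in> E \<and> is_path E p'"
      using Cons.prems(1) is_path_Cons_Cons_iff[of E a x p''] unfolding Cons by simp
    then have path_p': "is_path E p'" and edge: "{a, x} \<in> E" by simp_all
    show ?thesis
    proof (cases "x \<in> set q'")
      case True
      obtain y q'' where q': "q' = y # q''" using True by (cases q') auto
      have "is_path E q'"
        using Cons.prems(2) q q' is_path_Cons_Cons_iff[of E a y q''] by simp
      moreover have "hd p' = hd q'"
        using acyclic_path_no_chord[OF assms] Cons.prems(2) edge q True \<open>p' = x # p''\<close> by simp
      moreover have "last p' = last q'"
        using Cons.prems(4) q q' \<open>p' = x # p''\<close> by simp
      ultimately have "p' = q'"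
        using Cons.IH[OF path_p'] by blast
      then show ?thesis using q by simp
    next
      case False
      have "x \<noteq> a" "x \<in> verts E"
        using a_notin path_p' unfolding \<open>p' = x # p''\<close> by (auto simp: is_path_def)
      then have "is_path E (x # a # q')"
        using is_path_Cons_Cons_iff[of E x a q'] Cons.prems(2) q False edge
        by (simp add: insert_commute)
      moreover have "hd p' = hd (x # a # q')" "last p' = last (x # a # q')"
        using Cons.prems(4) q \<open>p' = x # p''\<close> by simp_all
      ultimately have "p' = x # a # q'"
        by (rule Cons.IH[OF path_p'])
      then show ?thesis using a_notin by simp
    qed
  qed
qed

lemma is_path_mono: "is_path F ps \<Longrightarrow> F \<subseteq> E \<Longrightarrow> is_path E ps"
  unfolding is_path_def verts_def by blast

lemma acyclic_graph_mono: "acyclic_graph E \<Longrightarrow> F \<subseteq> E \<Longrightarrow> acyclic_graph F"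
  unfolding acyclic_graph_def by (meson is_path_mono subsetD)

lemma parent_edge_path:
  assumes "acyclic_graph E" "is_path E ps" "hd ps = v" "last ps = r" "2 \<le> length ps"
  shows "parent_edge E r v = {ps ! 0, ps ! 1}"
  unfolding parent_edge_def
proof (rule the_equality)
  show "\<exists>ps'. is_path E ps' \<and> hd ps' = v \<and> last ps' = r \<and> 2 \<le> length ps'
      \<and> {ps ! 0, ps ! 1} = {ps' ! 0, ps' ! 1}"
    using assms(2-5) by blast
next
  fix c
  assume "\<exists>ps'. is_path E ps' \<and> hd ps' = v \<and> last ps' = r \<and> 2 \<le> length ps' \<and> c = {ps' ! 0, ps' ! 1}"
  then obtain ps' where "is_path E ps'" "hd ps' = v" "last ps' = r" "c = {ps' ! 0, ps' ! 1}"
    by blast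
  moreover from this have "ps' = ps"
    using acyclic_path_unique[OF assms(1)] assms(2-4) by simp
  ultimately show "c = {ps ! 0, ps ! 1}" by simp
qed

lemma path_edgesI: "Suc i < length ps \<Longrightarrow> {ps ! i, ps ! Suc i} \<in> path_edges ps"
  unfolding path_edges_def by auto

lemma set_subset_Union_path_edges: "2 \<le> length ps \<Longrightarrow> set ps \<subseteq> \<Union>(path_edges ps)"
proof
  fix x assume len: "2 \<le> length ps" and "x \<in> set ps"
  then obtain j where j: "j < length ps" "ps ! j = x" by (meson in_set_conv_nth)
  show "x \<in> \<Union>(path_edges ps)"
  proof (cases "Suc j < length ps")
    case True
    then show ?thesis using j path_edgesI[of j ps] by auto
  next
    case False
    then have "Suc (j - 1) < length ps" "Suc (j - 1) = j" using j len by auto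
    then show ?thesis using j path_edgesI[of "j - 1" ps] by auto
  qed
qed

lemma is_path_subgraph:
  assumes "is_path E ps" "2 \<le> length ps" "path_edges ps \<subseteq> F"
  shows "is_path F ps"
proof -
  have "set ps \<subseteq> verts F"
    using set_subset_Union_path_edges[OF assms(2)] assms(3) unfolding verts_def by blast
  moreover have "{ps ! i, ps ! Suc i} \<in> F" if "Suc i < length ps" for i
    using path_edgesI[OF that] assms(3) by blast
  ultimately show ?thesis
    using assms(1) unfolding is_path_def by blast
qed

lemma is_path_in_verts: "is_path E ps \<Longrightarrow> x \<in> set ps \<Longrightarrow> x \<in> verts E"
  by (auto simp: is_path_def)

section \<open>Friendliness\<close>

lemma m_friendly_lift_sum_list:
  fixes L :: "'g::ab_group_add \<Rightarrow> 'l"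
  assumes "m_friendly (Suc k) L" "length hs = k" "L g = L (sum_list hs)"
  obtains gs where "map L gs = map L hs" "sum_list gs = g"
proof -
  let ?z = "hs @ [sum_list hs]"
  have z: "?z \<in> Zm (Suc k)" unfolding Zm_def using assms(2) by simp
  have "\<forall>l\<in>map L ` Zm (Suc k). \<forall>i<Suc k. {gs ! i | gs. gs \<in> Zm (Suc k) \<and> map L gs = l}
      = L -` {l ! i}"
    using assms(1) by (simp only: m_friendly_def)
  then have "\<forall>i<Suc k. {gs ! i | gs. gs \<in> Zm (Suc k) \<and> map L gs = map L ?z} = L -` {map L ?z ! i}"
    using imageI[OF z, of "map L"] by (rule bspec)
  then have "{gs ! k | gs. gs \<in> Zm (Suc k) \<and> map L gs = map L ?z} = L -` {map L ?z ! k}"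
    using lessI by blast
  moreover have "g \<in> L -` {map L ?z ! k}"
    using assms(2,3) by (simp add: nth_append)
  ultimately have "g \<in> {gs ! k | gs. gs \<in> Zm (Suc k) \<and> map L gs = map L ?z}"
    by (simp only:)
  then obtain gs where gs: "gs \<in> Zm (Suc k)" "map L gs = map L ?z" "gs ! k = g"
    by auto
  have len: "length gs = Suc k" using gs(1) unfolding Zm_def by simp
  have "map L (butlast gs) = map L hs"
    using arg_cong[OF gs(2), of butlast] by (simp add: map_butlast)
  moreover have "gs \<noteq> []" using len by auto
  then have "last gs = g"
    using gs(3) len by (simp add: last_conv_nth)
  then have "sum_list (butlast gs) = g"
    using gs(1) unfolding Zm_def by simp
  ultimately show thesis by (rule that)
qed

lemma obtain_map_eq:
  assumes "distinct cs" "length gs = length cs"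
  obtains G where "map G cs = gs"
proof
  show "map (\<lambda>c. the (map_of (zip cs gs) c)) cs = gs"
    using map_of_zip_nth[OF assms(2)[symmetric] assms(1)] assms(2) by (simp add: list_eq_iff_nth_eq)
qed

lemma friendly_lift_sum:
  fixes L :: "'g::ab_group_add \<Rightarrow> 'l"
  assumes "friendly L" "finite C" "C \<noteq> {}" "L g = L (sum h C)"
  obtains G where "\<forall>c\<in>C. L (G c) = L (h c)" "sum G C = g"
proof (cases "card C = 1")
  case True
  then obtain c where "C = {c}" by (auto simp: card_Suc_eq)
  then show thesis using that[of "\<lambda>_. g"] assms(4) by simp
next
  case False
  obtain cs where cs: "distinct cs" "set cs = C"
    using finite_distinct_list[OF assms(2)] by blast
  have "card C = length cs" using distinct_card[OF cs(1)] cs(2) by simp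
  moreover have "card C \<noteq> 0" using assms(2,3) by simp
  ultimately have "3 \<le> Suc (length cs)"
    using False by linarith
  then have "m_friendly (Suc (length cs)) L"
    using assms(1) unfolding friendly_def by blast
  moreover have "L g = L (sum_list (map h cs))"
    using assms(4) cs by (simp add: sum_list_distinct_conv_sum_set)
  ultimately obtain gs where gs: "map L gs = map L (map h cs)" "sum_list gs = g"
    using m_friendly_lift_sum_list[of "length cs" L "map h cs"] by auto
  have "length gs = length cs" using arg_cong[OF gs(1), of length] by simp
  then obtain G where G: "map G cs = gs" using obtain_map_eq[OF cs(1)] by blast
  then have "map (L \<circ> G) cs = map (L \<circ> h) cs"
    using gs(1) by (simp only: map_map[symmetric])
  then have "\<forall>c\<in>C. L (G c) = L (h c)"
    using cs(2) unfolding map_eq_conv by simp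
  moreover have "sum G C = g"
    using G gs(2) cs sum_list_distinct_conv_sum_set[OF cs(1), of G] by simp
  ultimately show thesis by (rule that)
qed

section \<open>Binomials in the toric ideal\<close>

definition label_monomial :: "'e set \<Rightarrow> ('e \<Rightarrow> 'l) \<Rightarrow> ('e \<times> 'l) multiset" where
  "label_monomial E lab = mset_set ((\<lambda>x. (x, lab x)) ` E)"

lemma mono_img_mset_map: "mono_img E (mset (map A [0..<d])) = (\<Sum>i<d. label_monomial E (A i))"
proof -
  have "mono_img E (mset (map A [0..<d])) = sum_list (map (\<lambda>i. label_monomial E (A i)) [0..<d])"
    unfolding mono_img_def label_monomial_def
    by (simp only: mset_map[symmetric] sum_mset_sum_list map_map o_def)
  then show ?thesis
    by (simp add: interv_sum_list_conv_sum_set_nat atLeast0LessThan)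
qed

lemma label_monomial_split:
  assumes "finite E" "F \<subseteq> E" "\<forall>x\<in>F. lab x = lab1 x" "\<forall>x\<in>E - F. lab x = lab2 x"
  shows "label_monomial E lab = label_monomial F lab1 + label_monomial (E - F) lab2"
proof -
  have "(\<lambda>x. (x, lab x)) ` E = (\<lambda>x. (x, lab1 x)) ` F \<union> (\<lambda>x. (x, lab2 x)) ` (E - F)"
    using assms(2-4) by force
  moreover have "(\<lambda>x. (x, lab1 x)) ` F \<inter> (\<lambda>x. (x, lab2 x)) ` (E - F) = {}"
    by blast
  moreover have "finite F" using finite_subset[OF assms(2,1)] .
  ultimately show ?thesis
    unfolding label_monomial_def using assms(1) by (simp add: mset_set_Union)
qed

lemma mono_img_eq_if_binom_in_toric_ideal:
  assumes "binom d A B \<in> toric_ideal E r L"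
  shows "mono_img E (mset (map A [0..<d])) = mono_img E (mset (map B [0..<d]))"
proof (rule ccontr)
  let ?MA = "mset (map A [0..<d])" and ?MB = "mset (map B [0..<d])"
  assume ne: "mono_img E ?MA \<noteq> mono_img E ?MB"
  then have "?MA \<noteq> ?MB" by metis
  then have "{\<alpha>. binom d A B \<alpha> \<noteq> 0 \<and> mono_img E \<alpha> = mono_img E ?MA} = {?MA}"
    using ne by (auto simp: binom_def split: if_splits)
  moreover have "(\<Sum>\<alpha>\<in>{\<alpha>. binom d A B \<alpha> \<noteq> 0 \<and> mono_img E \<alpha> = mono_img E ?MA}. binom d A B \<alpha>) = 0"
    using assms unfolding toric_ideal_def by blast
  ultimately show False
    using \<open>?MA \<noteq> ?MB\<close> by (simp add: binom_def)
qed

lemma binom_in_toric_ideal: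
  assumes "\<forall>i<d. A i \<in> im_lab E r L \<and> B i \<in> im_lab E r L"
    and "mono_img E (mset (map A [0..<d])) = mono_img E (mset (map B [0..<d]))"
  shows "binom d A B \<in> toric_ideal E r L"
proof -
  let ?MA = "mset (map A [0..<d])" and ?MB = "mset (map B [0..<d])"
  have supp: "{\<alpha>. binom d A B \<alpha> \<noteq> 0} \<subseteq> {?MA, ?MB}"
    by (auto simp: binom_def split: if_splits)
  have "set_mset \<alpha> \<subseteq> im_lab E r L" if "binom d A B \<alpha> \<noteq> 0" for \<alpha>
  proof -
    have "\<alpha> = ?MA \<or> \<alpha> = ?MB" using that supp by blast
    then show ?thesis using assms(1) by (auto simp del: mset_map)
  qed
  moreover have "(\<Sum>\<alpha>\<in>{\<alpha>. binom d A B \<alpha> \<noteq> 0 \<and> mono_img E \<alpha> = \<beta>}. binom d A B \<alpha>) = 0" for \<beta>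
  proof (cases "?MA \<noteq> ?MB \<and> mono_img E ?MA = \<beta>")
    case True
    then have "binom d A B ?MA = 1" "binom d A B ?MB = -1"
      by (auto simp: binom_def)
    then have "{\<alpha>. binom d A B \<alpha> \<noteq> 0 \<and> mono_img E \<alpha> = \<beta>} = {?MA, ?MB}"
      using True assms(2) supp by (intro equalityI subsetI) auto
    then show ?thesis using True \<open>binom d A B ?MA = 1\<close> \<open>binom d A B ?MB = -1\<close> by simp
  next
    case False
    have "{\<alpha>. binom d A B \<alpha> \<noteq> 0 \<and> mono_img E \<alpha> = \<beta>} = {}"
    proof (cases "?MA = ?MB")
      case True
      then show ?thesis by (simp add: binom_def)
    next
      case False
      then show ?thesis using \<open>\<not> (?MA \<noteq> ?MB \<and> mono_img E ?MA = \<beta>)\<close> assms(2) supp by blast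
    qed
    then show ?thesis by (simp only: sum.empty)
  qed
  ultimately show ?thesis
    unfolding toric_ideal_def using finite_subset[OF supp] by blast
qed

lemma binom_in_toric_ideal_extend:
  assumes "binom d A B \<in> toric_ideal F r L"
    and "\<forall>i<d. C i \<in> im_lab E \<rho> L \<and> D i \<in> im_lab E \<rho> L"
    and "\<forall>i<d. label_monomial E (C i) = label_monomial F (A i) + X i"
    and "\<forall>i<d. label_monomial E (D i) = label_monomial F (B i) + X i"
  shows "binom d C D \<in> toric_ideal E \<rho> L"
proof (rule binom_in_toric_ideal[OF assms(2)])
  have "(\<Sum>i<d. label_monomial F (A i)) = (\<Sum>i<d. label_monomial F (B i))"
    using mono_img_eq_if_binom_in_toric_ideal[OF assms(1)] unfolding mono_img_mset_map .
  moreover have "(\<Sum>i<d. label_monomial E (C i)) = (\<Sum>i<d. label_monomial F (A i)) + (\<Sum>i<d. X i)"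
    using assms(3) by (simp add: sum.distrib[symmetric])
  moreover have "(\<Sum>i<d. label_monomial E (D i)) = (\<Sum>i<d. label_monomial F (B i)) + (\<Sum>i<d. X i)"
    using assms(4) by (simp add: sum.distrib[symmetric])
  ultimately show "mono_img E (mset (map C [0..<d])) = mono_img E (mset (map D [0..<d]))"
    unfolding mono_img_mset_map by simp
qed

lemma label_monomial_glue:
  assumes "finite E" "F \<subseteq> E"
  shows "label_monomial E (glue E F a n) = label_monomial F a + label_monomial (E - F) n"
  by (rule label_monomial_split[OF assms]) (use assms(2) in \<open>auto simp: glue_def\<close>)

lemma binom_glue_lower_in_toric_ideal:
  assumes "finite E" "F \<subseteq> E" "binom d A B \<in> toric_ideal F r L"
    and "\<forall>i<d. glue E F (A i) (N i) \<in> im_lab E \<rho> L \<and> glue E F (B i) (N i) \<in> im_lab E \<rho> L"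
  shows "binom d (\<lambda>i. glue E F (A i) (N i)) (\<lambda>i. glue E F (B i) (N i)) \<in> toric_ideal E \<rho> L"
  by (rule binom_in_toric_ideal_extend[OF assms(3,4), where X = "\<lambda>i. label_monomial (E - F) (N i)"])
    (simp_all add: label_monomial_glue[OF assms(1,2)])

lemma binom_glue_upper_in_toric_ideal:
  assumes "finite E" "F \<subseteq> E" "e \<in> F" "binom d A B \<in> toric_ideal (insert e (E - F)) r L"
    and "\<forall>i<d. M i e = A i e \<and> M i e = B i e"
    and "\<forall>i<d. glue E F (M i) (A i) \<in> im_lab E \<rho> L \<and> glue E F (M i) (B i) \<in> im_lab E \<rho> L"
  shows "binom d (\<lambda>i. glue E F (M i) (A i)) (\<lambda>i. glue E F (M i) (B i)) \<in> toric_ideal E \<rho> L"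
proof (rule binom_in_toric_ideal_extend[OF assms(4,6)])
  let ?F' = "insert e (E - F)"
  have F': "?F' \<subseteq> E" "E - ?F' = F - {e}" using assms(2,3) by auto
  have split: "label_monomial E (glue E F m a) = label_monomial ?F' a + label_monomial (F - {e}) m"
    if "m e = a e" for m a
    by (rule label_monomial_split[OF assms(1) F'(1), unfolded F'(2)])
      (use that assms(2,3) in \<open>auto simp: glue_def\<close>)
  show "\<forall>i<d. label_monomial E (glue E F (M i) (A i))
      = label_monomial ?F' (A i) + label_monomial (F - {e}) (M i)"
    using split assms(5) by blast
  show "\<forall>i<d. label_monomial E (glue E F (M i) (B i))
      = label_monomial ?F' (B i) + label_monomial (F - {e}) (M i)"
    using split assms(5) by blast
qed

section \<open>Trees with a root\<close>

locale tree_with_root =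
  fixes E :: "'v set set" and \<rho> :: 'v
  assumes rooted_tree: "rooted_tree E \<rho>"
begin

lemma finite_edges: "finite E"
  and card_edge: "c \<in> E \<Longrightarrow> card c = 2"
  and connected: "connected_graph E"
  and acyclic: "acyclic_graph E"
  and leaf_root: "leaf E \<rho>"
  using rooted_tree unfolding rooted_tree_def is_tree_def graph_edges_def by auto

lemma root_in_verts: "\<rho> \<in> verts E"
  using leaf_root by (simp add: leaf_def)

lemma finite_verts: "finite (verts E)"
  unfolding verts_def
proof (rule finite_Union[OF finite_edges])
  show "finite c" if "c \<in> E" for c
    using card_edge[OF that] by (intro card_ge_0_finite) simp
qed

definition root_path :: "'v \<Rightarrow> 'v list" where
  "root_path v = (THE ps. is_path E ps \<and> hd ps = v \<and> last ps = \<rho>)"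

definition parent :: "'v \<Rightarrow> 'v" where
  "parent v = root_path v ! 1"

definition ancestor :: "'v \<Rightarrow> 'v \<Rightarrow> bool" where
  "ancestor a v \<longleftrightarrow> a \<in> set (root_path v)"

lemma root_path_eqI:
  assumes "is_path E ps" "hd ps = v" "last ps = \<rho>"
  shows "root_path v = ps"
  unfolding root_path_def
  using acyclic_path_unique[OF acyclic] assms by (intro the_equality) auto

lemma
  assumes "v \<in> verts E"
  shows is_path_root_path: "is_path E (root_path v)"
    and hd_root_path: "hd (root_path v) = v"
    and last_root_path: "last (root_path v) = \<rho>"
proof -
  obtain ps where "is_path E ps" "hd ps = v" "last ps = \<rho>"
    using connected assms root_in_verts unfolding connected_graph_def by blast
  then show "is_path E (root_path v)" "hd (root_path v) = v" "last (root_path v) = \<rho>"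
    using root_path_eqI by auto
qed

lemma root_path_not_Nil: "v \<in> verts E \<Longrightarrow> root_path v \<noteq> []"
  using is_path_root_path by (auto simp: is_path_def)

lemma root_path_nth_0: "v \<in> verts E \<Longrightarrow> root_path v ! 0 = v"
  using hd_root_path root_path_not_Nil by (metis hd_conv_nth)

lemma root_path_root: "root_path \<rho> = [\<rho>]"
  using root_path_eqI[of "[\<rho>]"] root_in_verts by (simp add: is_path_def)

lemma root_path_drop:
  assumes "v \<in> verts E" "i < length (root_path v)"
  shows "root_path (root_path v ! i) = drop i (root_path v)"
proof (rule root_path_eqI)
  show "is_path E (drop i (root_path v))"
    using is_path_drop[OF is_path_root_path] assms by blast
  show "hd (drop i (root_path v)) = root_path v ! i"
    using assms(2) by (simp add: hd_drop_conv_nth)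
  show "last (drop i (root_path v)) = \<rho>"
    using assms last_root_path by simp
qed

lemma root_path_nth_in_verts: "v \<in> verts E \<Longrightarrow> i < length (root_path v) \<Longrightarrow> root_path v ! i \<in> verts E"
  by (meson is_path_in_verts is_path_root_path nth_mem)

lemma length_root_path_ge_2:
  assumes "v \<in> verts E" "v \<noteq> \<rho>"
  shows "2 \<le> length (root_path v)"
proof (rule ccontr)
  assume "\<not> ?thesis"
  moreover have "length (root_path v) \<noteq> 0"
    using root_path_not_Nil[OF assms(1)] by simp
  ultimately have "length (root_path v) = 1"
    by linarith
  then obtain a where "root_path v = [a]"
    by (auto simp: length_Suc_conv)
  then show False
    using hd_root_path[OF assms(1)] last_root_path[OF assms(1)] assms(2) by simp
qed

lemma
  assumes "v \<in> verts E" "v \<noteq> \<rho>"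
  shows root_path_Cons: "root_path v = v # root_path (parent v)"
    and parent_in_verts: "parent v \<in> verts E"
    and parent_edge_in_edges: "{v, parent v} \<in> E"
proof -
  have len: "1 < length (root_path v)"
    using length_root_path_ge_2[OF assms] by linarith
  have "root_path (parent v) = tl (root_path v)"
    using root_path_drop[OF assms(1) len] unfolding parent_def by (simp add: drop_Suc)
  then show "root_path v = v # root_path (parent v)"
    using hd_root_path[OF assms(1)] root_path_not_Nil[OF assms(1)] by (metis list.collapse)
  show "parent v \<in> verts E"
    unfolding parent_def using root_path_nth_in_verts[OF assms(1) len] .
  have "{root_path v ! 0, root_path v ! Suc 0} \<in> E"
    using is_path_root_path[OF assms(1)] len unfolding is_path_def by auto
  then show "{v, parent v} \<in> E"
    using root_path_nth_0[OF assms(1)] by (simp add: parent_def)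
qed

lemma length_root_path_parent:
  "v \<in> verts E \<Longrightarrow> v \<noteq> \<rho> \<Longrightarrow> length (root_path v) = Suc (length (root_path (parent v)))"
  using root_path_Cons by (metis length_Cons)

lemma parent_neq: "v \<in> verts E \<Longrightarrow> v \<noteq> \<rho> \<Longrightarrow> parent v \<noteq> v"
  using length_root_path_parent by force

lemma length_root_path_le_card: "v \<in> verts E \<Longrightarrow> length (root_path v) \<le> card (verts E)"
  using is_path_root_path finite_verts by (metis card_mono distinct_card is_path_def)

lemma root_path_nth_Suc:
  assumes "v \<in> verts E" "Suc i < length (root_path v)"
  shows "root_path v ! Suc i = parent (root_path v ! i)" and "root_path v ! i \<noteq> \<rho>"
proof -
  have drop: "root_path (root_path v ! i) = drop i (root_path v)"
    using root_path_drop[OF assms(1)] assms(2) by simp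
  then show "root_path v ! Suc i = parent (root_path v ! i)"
    using assms by (simp add: parent_def)
  show "root_path v ! i \<noteq> \<rho>"
  proof
    assume "root_path v ! i = \<rho>"
    then have "drop i (root_path v) = [\<rho>]"
      using drop root_path_root by simp
    then have "length (drop i (root_path v)) = 1"
      by simp
    then show False using assms(2) by simp
  qed
qed

lemma ancestor_refl: "v \<in> verts E \<Longrightarrow> ancestor v v"
  unfolding ancestor_def using hd_root_path root_path_not_Nil by (metis list.set_sel(1))

lemma ancestor_drop:
  assumes "ancestor a v" "v \<in> verts E"
  obtains i where "i < length (root_path v)" "root_path a = drop i (root_path v)"
      "a = root_path v ! i"
proof -
  obtain i where i: "i < length (root_path v)" "a = root_path v ! i"
    using assms(1) unfolding ancestor_def by (metis in_set_conv_nth)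
  then show thesis
    using that[OF i(1) _ i(2)] root_path_drop[OF assms(2) i(1)] by simp
qed

lemma ancestor_length_le:
  assumes "ancestor a v" "v \<in> verts E"
  shows "length (root_path a) \<le> length (root_path v)"
proof -
  obtain i where "root_path a = drop i (root_path v)"
    using ancestor_drop[OF assms] by blast
  then show ?thesis by simp
qed

lemma ancestor_trans:
  assumes "ancestor a b" "ancestor b v" "v \<in> verts E"
  shows "ancestor a v"
proof -
  obtain i where "root_path b = drop i (root_path v)"
    using ancestor_drop[OF assms(2,3)] by blast
  then show ?thesis
    using assms(1) unfolding ancestor_def by (metis in_set_dropD)
qed

lemma ancestor_parent_iff: "v \<in> verts E \<Longrightarrow> v \<noteq> \<rho> \<Longrightarrow> ancestor a v \<longleftrightarrow> a = v \<or> ancestor a (parent v)"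
  using root_path_Cons(1)[of v] by (simp add: ancestor_def)

lemma ancestor_root_iff: "ancestor a \<rho> \<longleftrightarrow> a = \<rho>"
  unfolding ancestor_def root_path_root by simp

lemma not_ancestor_parent:
  assumes "v \<in> verts E" "v \<noteq> \<rho>"
  shows "\<not> ancestor v (parent v)"
proof
  assume "ancestor v (parent v)"
  then have "length (root_path v) \<le> length (root_path (parent v))"
    using ancestor_length_le parent_in_verts[OF assms] by blast
  then show False
    using length_root_path_parent[OF assms] by simp
qed

lemma ancestor_same_depth:
  assumes "ancestor a v" "ancestor b v" "v \<in> verts E" "length (root_path a) = length (root_path b)"
  shows "a = b"
proof -
  obtain i where i: "i < length (root_path v)" "root_path a = drop i (root_path v)"
      "a = root_path v ! i"
    using ancestor_drop[OF assms(1,3)] by blast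
  obtain j where j: "j < length (root_path v)" "root_path b = drop j (root_path v)"
      "b = root_path v ! j"
    using ancestor_drop[OF assms(2,3)] by blast
  have "i = j" using i j assms(4) by simp
  then show ?thesis using i j by simp
qed

text \<open>For an edge \<open>{a, b}\<close> with \<open>b\<close> not on the path from \<open>a\<close> to the root, that path preceded
  by \<open>b\<close> is the path from \<open>b\<close>; if \<open>b\<close> is on it but is not the parent of \<open>a\<close>, the edge closes a
  cycle.\<close>
lemma edge_lower_end:
  assumes "c \<in> E"
  obtains y where "y \<in> verts E" "y \<noteq> \<rho>" "c = {y, parent y}"
proof -
  obtain a b where ab: "a \<noteq> b" "c = {a, b}"
    using card_edge[OF assms] by (auto simp: card_2_iff)
  have aV: "a \<in> verts E" and bV: "b \<in> verts E"
    using ab assms by (auto simp: verts_def)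
  show thesis
  proof (cases "b \<in> set (root_path a)")
    case True
    then have ar: "a \<noteq> \<rho>" using root_path_root ab by auto
    show thesis
    proof (cases "b = parent a")
      case True
      then show thesis using that ab aV ar by blast
    next
      case False
      obtain i where i: "i < length (root_path a)" "root_path a ! i = b"
        using \<open>b \<in> set (root_path a)\<close> by (meson in_set_conv_nth)
      have "i \<noteq> 0" using i ab root_path_nth_0[OF aV] by metis
      moreover have "i \<noteq> 1" using i False by (auto simp: parent_def)
      ultimately have i2: "2 \<le> i" by simp
      let ?cycle = "take (Suc i) (root_path a)"
      have "is_path E ?cycle" using is_path_take is_path_root_path[OF aV] by blast
      moreover have "3 \<le> length ?cycle" using i i2 by simp
      moreover have "last ?cycle = b" using i by (simp add: take_Suc_conv_app_nth)
      moreover have "hd ?cycle = a" using root_path_Cons[OF aV ar] by simp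
      moreover have "{b, a} \<in> E" using assms ab by (simp add: insert_commute)
      ultimately show thesis using acyclic unfolding acyclic_graph_def by metis
    qed
  next
    case False
    obtain r where r: "root_path a = a # r"
      using hd_root_path[OF aV] root_path_not_Nil[OF aV] by (cases "root_path a") auto
    have "is_path E (b # root_path a)"
      using is_path_Cons_Cons_iff[of E b a r] r False bV is_path_root_path[OF aV] ab assms
      by (simp add: insert_commute)
    then have pb: "root_path b = b # root_path a"
      using root_path_eqI last_root_path[OF aV] root_path_not_Nil[OF aV] by simp
    then have "b \<noteq> \<rho>" using root_path_root root_path_not_Nil[OF aV] by auto
    moreover have "parent b = a" using pb r by (simp add: parent_def)
    ultimately show thesis using that ab bV by (metis insert_commute)
  qed
qed

lemma lower_end_unique:
  assumes "y \<in> verts E" "y \<noteq> \<rho>" "z \<in> verts E" "z \<noteq> \<rho>" "{y, parent y} = {z, parent z}"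
  shows "y = z"
proof (rule ccontr)
  assume "y \<noteq> z"
  then have "y = parent z" "z = parent y"
    using assms(5) by (auto simp: doubleton_eq_iff)
  then show False
    using length_root_path_parent[of y] length_root_path_parent[of z] assms by simp
qed

lemma parent_edge_eq:
  assumes "v \<in> verts E" "v \<noteq> \<rho>"
  shows "parent_edge E \<rho> v = {v, parent v}"
  using parent_edge_path[OF acyclic is_path_root_path hd_root_path last_root_path
      length_root_path_ge_2]
    root_path_nth_0 assms by (simp add: parent_def)

definition children :: "'v \<Rightarrow> 'v set" where
  "children x = {z \<in> verts E. z \<noteq> \<rho> \<and> parent z = x}"

lemma child_edges_iff:
  assumes "v \<in> verts E" "v \<noteq> \<rho>"
  shows "c \<in> child_edges E \<rho> v \<longleftrightarrow> (\<exists>z\<in>children v. c = {z, parent z})"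
proof
  assume "c \<in> child_edges E \<rho> v"
  then have c: "c \<in> E" "v \<in> c" "c \<noteq> {v, parent v}"
    using parent_edge_eq[OF assms] by (auto simp: child_edges_def)
  obtain y where y: "y \<in> verts E" "y \<noteq> \<rho>" "c = {y, parent y}"
    using edge_lower_end[OF c(1)] by blast
  then have "parent y = v" using c by auto
  then show "\<exists>z\<in>children v. c = {z, parent z}"
    using y unfolding children_def by blast
next
  assume "\<exists>z\<in>children v. c = {z, parent z}"
  then obtain z where z: "z \<in> verts E" "z \<noteq> \<rho>" "parent z = v" "c = {z, parent z}"
    unfolding children_def by blast
  have "c \<noteq> {v, parent v}"
    using lower_end_unique[OF z(1,2) assms] parent_neq[OF assms] z by auto
  then show "c \<in> child_edges E \<rho> v"
    using parent_edge_in_edges[OF z(1,2)] z parent_edge_eq[OF assms] by (simp add: child_edges_def)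
qed

lemma child_edges_subset: "child_edges E \<rho> v \<subseteq> E"
  by (auto simp: child_edges_def)

lemma finite_child_edges: "finite (child_edges E \<rho> v)"
  using child_edges_subset finite_edges finite_subset by blast

lemma edges_at_vertex:
  assumes "v \<in> verts E" "v \<noteq> \<rho>"
  shows "{c \<in> E. v \<in> c} = insert {v, parent v} (child_edges E \<rho> v)"
    and "{v, parent v} \<notin> child_edges E \<rho> v"
  using parent_edge_in_edges[OF assms] parent_edge_eq[OF assms] by (auto simp: child_edges_def)

lemma child_edges_nonempty:
  assumes "interior_vertex E \<rho> v"
  shows "child_edges E \<rho> v \<noteq> {}"
proof -
  have v: "v \<in> verts E" "v \<noteq> \<rho>" and "degree E v \<noteq> 1"
    using assms by (auto simp: interior_vertex_def leaf_def)
  moreover have "degree E v = Suc (card (child_edges E \<rho> v))"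
    unfolding degree_def edges_at_vertex[OF v] using edges_at_vertex(2)[OF v] finite_child_edges
      by simp
  ultimately show ?thesis by auto
qed

lemma ancestor_child:
  assumes "z \<in> children x"
  shows "ancestor x z"
  using assms ancestor_parent_iff ancestor_refl parent_in_verts unfolding children_def by blast

lemma ancestor_obtain_child:
  assumes "ancestor x v" "v \<in> verts E" "v \<noteq> x"
  obtains z where "z \<in> children x" "ancestor z v"
  using assms
proof (induction "length (root_path v)" arbitrary: v rule: less_induct)
  case less
  have v: "v \<noteq> \<rho>" using less.prems ancestor_root_iff by metis
  have "ancestor x (parent v)"
    using ancestor_parent_iff[OF less.prems(3) v] less.prems by metis
  show thesis
  proof (cases "parent v = x")
    case True
    then show thesis using less.prems v ancestor_refl unfolding children_def by blast
  next
    case False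
    have "length (root_path (parent v)) < length (root_path v)"
      using length_root_path_parent[OF less.prems(3) v] by simp
    then show thesis
      using less.hyps \<open>ancestor x (parent v)\<close> parent_in_verts[OF less.prems(3) v] False
        ancestor_parent_iff[OF less.prems(3) v] less.prems(1) by metis
  qed
qed

lemma path_edges_root_path:
  assumes "y \<in> verts E"
  shows "path_edges (root_path y) = {{z, parent z} | z. z \<in> set (root_path y) \<and> z \<noteq> \<rho>}"
proof (intro equalityI subsetI)
  fix c assume "c \<in> path_edges (root_path y)"
  then obtain i where i: "Suc i < length (root_path y)" "c = {root_path y ! i, root_path y ! Suc i}"
    unfolding path_edges_def by blast
  then have "c = {root_path y ! i, parent (root_path y ! i)}" "root_path y ! i \<noteq> \<rho>"
    using root_path_nth_Suc[OF assms] by auto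
  moreover have "root_path y ! i \<in> set (root_path y)" using i by simp
  ultimately show "c \<in> {{z, parent z} | z. z \<in> set (root_path y) \<and> z \<noteq> \<rho>}" by blast
next
  fix c assume "c \<in> {{z, parent z} | z. z \<in> set (root_path y) \<and> z \<noteq> \<rho>}"
  then obtain z where z: "z \<in> set (root_path y)" "z \<noteq> \<rho>" "c = {z, parent z}" by blast
  obtain i where i: "i < length (root_path y)" "root_path y ! i = z"
    using z(1) by (meson in_set_conv_nth)
  have "Suc i < length (root_path y)"
  proof (rule ccontr)
    assume "\<not> ?thesis"
    then have "i = length (root_path y) - 1" using i(1) by simp
    then have "z = last (root_path y)"
      using i root_path_not_Nil[OF assms] by (simp add: last_conv_nth)
    then show False using z(2) last_root_path[OF assms] by simp
  qed
  then show "c \<in> path_edges (root_path y)"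
    using path_edgesI root_path_nth_Suc(1)[OF assms] i z(3) by metis
qed

lemma parent_edge_in_path_edges_root_path_iff:
  assumes "w \<in> verts E" "w \<noteq> \<rho>" "y \<in> verts E"
  shows "{w, parent w} \<in> path_edges (root_path y) \<longleftrightarrow> ancestor w y"
proof
  assume "{w, parent w} \<in> path_edges (root_path y)"
  then obtain z where z: "z \<in> set (root_path y)" "z \<noteq> \<rho>" "{w, parent w} = {z, parent z}"
    unfolding path_edges_root_path[OF assms(3)] by blast
  then have "z = w"
    using lower_end_unique[OF _ z(2) assms(1,2)] is_path_in_verts[OF is_path_root_path[OF assms(3)]]
    by metis
  then show "ancestor w y" using z(1) by (simp add: ancestor_def)
qed (use assms path_edges_root_path ancestor_def in auto)

lemma below_iff_root_path:
  "below E \<rho> e c \<longleftrightarrow> (\<exists>y\<in>verts E. y \<noteq> \<rho> \<and> c = {y, parent y} \<and> e \<in> path_edges (root_path y))"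
proof
  assume "below E \<rho> e c"
  then obtain ps where ps: "is_path E ps" "hd ps = \<rho>" "2 \<le> length ps"
      "{ps ! (length ps - 2), last ps} = c" "e \<in> path_edges ps"
    unfolding below_def by blast
  define y where "y = last ps"
  have "ps \<noteq> []" using ps(3) by auto
  then have y: "y \<in> verts E"
    using ps(1) is_path_in_verts unfolding y_def by (meson last_in_set)
  have path: "root_path y = rev ps"
    using ps(1,2) is_path_rev by (intro root_path_eqI) (auto simp: y_def hd_rev last_rev)
  then have "y \<noteq> \<rho>" using ps(3) root_path_root by force
  moreover have "parent y = ps ! (length ps - 2)"
    using path ps(3) by (simp add: parent_def rev_nth numeral_2_eq_2)
  moreover have "c = {y, parent y}"
    using ps(4) \<open>parent y = ps ! (length ps - 2)\<close> unfolding y_def by (simp add: insert_commute)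
  moreover have "e \<in> path_edges (root_path y)"
    using ps(5) path by (simp add: path_edges_rev)
  ultimately show "\<exists>y\<in>verts E. y \<noteq> \<rho> \<and> c = {y, parent y} \<and> e \<in> path_edges (root_path y)"
    using y by blast
next
  assume "\<exists>y\<in>verts E. y \<noteq> \<rho> \<and> c = {y, parent y} \<and> e \<in> path_edges (root_path y)"
  then obtain y where y: "y \<in> verts E" "y \<noteq> \<rho>" "c = {y, parent y}" "e \<in> path_edges (root_path y)"
    by blast
  let ?ps = "rev (root_path y)"
  have len: "2 \<le> length ?ps" using length_root_path_ge_2[OF y(1,2)] by simp
  then have "?ps ! (length ?ps - 2) = parent y"
    by (simp add: rev_nth parent_def numeral_2_eq_2 Suc_diff_Suc)
  moreover have "is_path E ?ps" "hd ?ps = \<rho>" "last ?ps = y"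
    using is_path_root_path[OF y(1)] hd_root_path[OF y(1)] last_root_path[OF y(1)]
      root_path_not_Nil[OF y(1)]
    by (auto simp: is_path_rev hd_rev last_rev)
  ultimately show "below E \<rho> e c"
    unfolding below_def using len y(3,4) path_edges_rev by (metis insert_commute)
qed

definition edges_below :: "'v \<Rightarrow> 'v set set" where
  "edges_below w = {{y, parent y} | y. y \<in> verts E \<and> y \<noteq> \<rho> \<and> ancestor w y}"

lemma edges_below_subset: "edges_below w \<subseteq> E"
  unfolding edges_below_def using parent_edge_in_edges by blast

lemma edges_below_iff:
  assumes "y \<in> verts E" "y \<noteq> \<rho>"
  shows "{y, parent y} \<in> edges_below w \<longleftrightarrow> ancestor w y"
proof
  assume "{y, parent y} \<in> edges_below w"
  then obtain z where "z \<in> verts E" "z \<noteq> \<rho>" "ancestor w z" "{y, parent y} = {z, parent z}"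
    unfolding edges_below_def by blast
  then show "ancestor w y" using lower_end_unique[OF assms] by metis
qed (use assms in \<open>auto simp: edges_below_def\<close>)

lemma edges_belowE:
  assumes "c \<in> edges_below w"
  obtains y where "y \<in> verts E" "y \<noteq> \<rho>" "ancestor w y" "c = {y, parent y}"
  using assms unfolding edges_below_def by blast

lemma T_minus_eq:
  assumes "w \<in> verts E" "w \<noteq> \<rho>"
  shows "T_minus E \<rho> {w, parent w} = edges_below w"
proof -
  have "below E \<rho> {w, parent w} c \<longleftrightarrow> c \<in> edges_below w" for c
    unfolding below_iff_root_path edges_below_def
    by (auto simp: parent_edge_in_path_edges_root_path_iff[OF assms])
  then show ?thesis
    unfolding T_minus_def using edges_below_subset by blast
qed

lemma near_end_eq:
  assumes "w \<in> verts E" "w \<noteq> \<rho>"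
  shows "near_end E \<rho> {w, parent w} = parent w"
  unfolding near_end_def
proof (rule the_equality)
  have p: "parent w \<in> verts E" using parent_in_verts[OF assms] .
  let ?ps = "rev (root_path (parent w))"
  have "is_path E ?ps" "hd ?ps = \<rho>" "last ?ps = parent w"
    using is_path_root_path[OF p] hd_root_path[OF p] last_root_path[OF p] root_path_not_Nil[OF p]
    by (auto simp: is_path_rev hd_rev last_rev)
  moreover have "{w, parent w} \<notin> path_edges ?ps"
    using parent_edge_in_path_edges_root_path_iff[OF assms p] not_ancestor_parent[OF assms]
    by (simp add: path_edges_rev)
  ultimately show "parent w \<in> {w, parent w} \<and>
      (\<exists>ps. is_path E ps \<and> hd ps = \<rho> \<and> last ps = parent w \<and> {w, parent w} \<notin> path_edges ps)"
    by blast
next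
  fix u
  assume u: "u \<in> {w, parent w} \<and>
      (\<exists>ps. is_path E ps \<and> hd ps = \<rho> \<and> last ps = u \<and> {w, parent w} \<notin> path_edges ps)"
  show "u = parent w"
  proof (rule ccontr)
    assume "u \<noteq> parent w"
    then obtain ps where ps: "is_path E ps" "hd ps = \<rho>" "last ps = w"
        "{w, parent w} \<notin> path_edges ps"
      using u by auto
    then have "root_path w = rev ps"
      using is_path_rev by (intro root_path_eqI) (auto simp: hd_rev last_rev)
    then show False
      using ps(4) parent_edge_in_path_edges_root_path_iff[OF assms assms(1)]
        ancestor_refl[OF assms(1)]
      by (metis path_edges_rev)
  qed
qed

lemma parent_edge_in_edges_below: "w \<in> verts E \<Longrightarrow> w \<noteq> \<rho> \<Longrightarrow> {w, parent w} \<in> edges_below w"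
  using edges_below_iff ancestor_refl by blast

lemma edges_below_child_subset:
  assumes "z \<in> children x"
  shows "edges_below z \<subseteq> edges_below x"
proof
  fix c assume "c \<in> edges_below z"
  then obtain y where y: "y \<in> verts E" "y \<noteq> \<rho>" "ancestor z y" "c = {y, parent y}"
    by (rule edges_belowE)
  then have "ancestor x y" using ancestor_trans[OF ancestor_child[OF assms]] by blast
  then show "c \<in> edges_below x" using edges_below_iff[OF y(1,2)] y(4) by simp
qed

lemma edges_below_children_disjoint:
  assumes "z1 \<in> children x" "z2 \<in> children x" "c \<in> edges_below z1" "c \<in> edges_below z2"
  shows "z1 = z2"
proof -
  obtain y1 where y1: "y1 \<in> verts E" "y1 \<noteq> \<rho>" "ancestor z1 y1" "c = {y1, parent y1}"
    using assms(3) by (rule edges_belowE)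
  obtain y2 where y2: "y2 \<in> verts E" "y2 \<noteq> \<rho>" "ancestor z2 y2" "c = {y2, parent y2}"
    using assms(4) by (rule edges_belowE)
  have "y1 = y2" using lower_end_unique[OF y1(1,2) y2(1,2)] y1(4) y2(4) by simp
  moreover have "length (root_path z1) = length (root_path z2)"
    using assms(1,2) length_root_path_parent unfolding children_def by auto
  ultimately show ?thesis using ancestor_same_depth y1 y2 by blast
qed

lemma parent_edge_notin_edges_below_child:
  assumes "z \<in> children x" "x \<noteq> \<rho>"
  shows "{x, parent x} \<notin> edges_below z"
proof
  have z: "z \<in> verts E" "z \<noteq> \<rho>" "parent z = x" using assms(1) unfolding children_def by auto
  then have x: "x \<in> verts E" using parent_in_verts by blast
  assume "{x, parent x} \<in> edges_below z"
  then have "ancestor z x" using edges_below_iff[OF x assms(2)] by simp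
  then show False using not_ancestor_parent[OF z(1,2)] z(3) by simp
qed

lemma edge_at_vertex_cases:
  assumes "v \<in> verts E" "v \<noteq> \<rho>" "c \<in> E" "v \<in> c"
  obtains "c = {v, parent v}" | z where "z \<in> children v" "c = {z, parent z}"
proof -
  have "c \<in> insert {v, parent v} (child_edges E \<rho> v)"
    using edges_at_vertex(1)[OF assms(1,2)] assms(3,4) by (metis (mono_tags) mem_Collect_eq)
  then show thesis
    using that child_edges_iff[OF assms(1,2)] by (metis insertE)
qed

lemma edges_at_vertex_subset_edges_below:
  assumes "ancestor w v" "v \<in> verts E" "v \<noteq> \<rho>"
  shows "{c \<in> E. v \<in> c} \<subseteq> edges_below w"
proof
  fix c assume "c \<in> {c \<in> E. v \<in> c}"
  then have "c \<in> E" "v \<in> c" by auto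
  then show "c \<in> edges_below w"
  proof (rule edge_at_vertex_cases[OF assms(2,3)])
    assume "c = {v, parent v}"
    then show ?thesis using edges_below_iff[OF assms(2,3)] assms(1) by simp
  next
    fix z assume z: "z \<in> children v" "c = {z, parent z}"
    then have "z \<in> verts E" "z \<noteq> \<rho>" unfolding children_def by auto
    moreover have "ancestor w z"
      using ancestor_trans[OF assms(1) ancestor_child[OF z(1)] \<open>z \<in> verts E\<close>] .
    ultimately show ?thesis using edges_below_iff z(2) by simp
  qed
qed

lemma edge_at_vertex_in_edges_below:
  assumes "\<not> ancestor w v" "v \<in> verts E" "v \<noteq> \<rho>" "c \<in> E" "v \<in> c" "c \<in> edges_below w"
  shows "c = {w, parent w}"
proof (rule edge_at_vertex_cases[OF assms(2-5)])
  assume "c = {v, parent v}"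
  then show ?thesis using edges_below_iff[OF assms(2,3)] assms(1,6) by simp
next
  fix z assume "z \<in> children v" "c = {z, parent z}"
  then have z: "z \<in> verts E" "z \<noteq> \<rho>" "parent z = v" "c = {z, parent z}"
    unfolding children_def by auto
  then have "ancestor w z" using edges_below_iff[OF z(1,2), of w] assms(6) by simp
  then have "w = z" using ancestor_parent_iff[OF z(1,2)] z(3) assms(1) by simp
  then show ?thesis using z(4) by simp
qed

section \<open>Consistent assignments\<close>

definition consistent_at :: "('v set \<Rightarrow> 'g::ab_group_add) \<Rightarrow> 'v \<Rightarrow> bool" where
  "consistent_at h v \<longleftrightarrow> h {v, parent v} = sum h (child_edges E \<rho> v)"

lemma interior_vertexD: "interior_vertex E \<rho> v \<Longrightarrow> v \<in> verts E \<and> v \<noteq> \<rho>"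
  by (simp add: interior_vertex_def)

lemma consistent_iff_consistent_at:
  "consistent E \<rho> h \<longleftrightarrow> (\<forall>v. interior_vertex E \<rho> v \<longrightarrow> consistent_at h v)"
proof -
  have "interior_vertex E \<rho> v \<Longrightarrow> parent_edge E \<rho> v = {v, parent v}" for v
    using parent_edge_eq interior_vertexD by blast
  then show ?thesis
    unfolding consistent_def consistent_at_def by auto
qed

lemma consistent_at_cong:
  assumes "v \<in> verts E" "v \<noteq> \<rho>" "\<And>c. c \<in> E \<Longrightarrow> v \<in> c \<Longrightarrow> h' c = h c"
  shows "consistent_at h' v \<longleftrightarrow> consistent_at h v"
proof -
  have "h' c = h c" if "c \<in> insert {v, parent v} (child_edges E \<rho> v)" for c
    using that assms(3) edges_at_vertex(1)[OF assms(1,2)] by blast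
  then have "h' {v, parent v} = h {v, parent v}"
    and "sum h' (child_edges E \<rho> v) = sum h (child_edges E \<rho> v)"
    by (auto intro: sum.cong)
  then show ?thesis
    unfolding consistent_at_def by simp
qed

text \<open>The hypotheses make the parent edge and the child edges of \<open>v\<close> in \<open>F\<close>, rooted at \<open>r\<close>,
  the same as in \<open>E\<close>.\<close>
lemma consistent_at_if_consistent_subgraph:
  assumes "F \<subseteq> E" "interior_vertex E \<rho> v" "{c \<in> E. v \<in> c} \<subseteq> F"
    and ps: "is_path F ps" "hd ps = v" "last ps = r" "2 \<le> length ps" "ps ! 1 = parent v"
    and cons: "consistent F r h"
  shows "consistent_at h v"
proof -
  have v: "v \<in> verts E" "v \<noteq> \<rho>" using interior_vertexD[OF assms(2)] by auto
  have "ps \<noteq> []" using ps(4) by auto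
  then have ps0: "ps ! 0 = v" using ps(2) by (simp add: hd_conv_nth)
  have "distinct ps" using ps(1) unfolding is_path_def by blast
  then have "ps ! 0 \<noteq> ps ! (length ps - 1)"
    using ps(4) by (subst nth_eq_iff_index_eq) auto
  then have "v \<noteq> r"
    using ps0 ps(3) \<open>ps \<noteq> []\<close> by (simp add: last_conv_nth)
  have parent_edge_F: "parent_edge F r v = {v, parent v}"
    using parent_edge_path[OF acyclic_graph_mono[OF acyclic assms(1)] ps(1-4)] ps0 ps(5) by simp
  have edges_at: "{c \<in> F. v \<in> c} = {c \<in> E. v \<in> c}" using assms(1,3) by blast
  then have child_edges: "child_edges F r v = child_edges E \<rho> v"
    unfolding child_edges_def parent_edge_eq[OF v] parent_edge_F by blast
  have "v \<in> verts F"
    using assms(3) parent_edge_in_edges[OF v] unfolding verts_def by blast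
  moreover have "\<not> leaf F v"
    using assms(2) edges_at v unfolding interior_vertex_def leaf_def degree_def by simp
  ultimately have "interior_vertex F r v"
    using \<open>v \<noteq> r\<close> by (simp add: interior_vertex_def)
  then show ?thesis
    using cons parent_edge_F child_edges
    unfolding consistent_def consistent_at_def by metis
qed

lemma consistent_at_if_consistent_edges_below:
  assumes w: "w \<in> verts E" "w \<noteq> \<rho>" and "ancestor w v" "interior_vertex E \<rho> v"
    and "consistent (edges_below w) (parent w) h"
  shows "consistent_at h v"
proof -
  have v: "v \<in> verts E" "v \<noteq> \<rho>" using interior_vertexD[OF assms(4)] by auto
  obtain i where i: "i < length (root_path v)" "root_path w = drop i (root_path v)"
      "w = root_path v ! i"
    using ancestor_drop[OF assms(3) v(1)] by blast
  have len: "Suc (Suc i) \<le> length (root_path v)"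
    using length_root_path_ge_2[OF w] i(2) by simp
  define ps where "ps = take (Suc (Suc i)) (root_path v)"
  have "last ps = parent w"
    using len root_path_nth_Suc(1)[OF v(1)] i(3) by (simp add: ps_def take_Suc_conv_app_nth)
  moreover have "path_edges ps \<subseteq> edges_below w"
  proof
    fix c assume "c \<in> path_edges ps"
    then obtain j where j: "Suc j < Suc (Suc i)" "c = {root_path v ! j, root_path v ! Suc j}"
      using len unfolding path_edges_def ps_def by auto
    let ?y = "root_path v ! j"
    have j_len: "Suc j < length (root_path v)" using j(1) len by simp
    have "c = {?y, parent ?y}" "?y \<noteq> \<rho>"
      using j root_path_nth_Suc[OF v(1) j_len] by auto
    moreover have "?y \<in> verts E"
      using root_path_nth_in_verts[OF v(1)] j_len by simp
    moreover have "ancestor w ?y"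
    proof -
      have "drop j (root_path v) ! (i - j) = w" "i - j < length (drop j (root_path v))"
        using i j(1) by auto
      then have "w \<in> set (drop j (root_path v))" by (metis nth_mem)
      then show ?thesis
        using root_path_drop[OF v(1)] j_len by (simp add: ancestor_def)
    qed
    ultimately show "c \<in> edges_below w"
      using edges_below_iff by blast
  qed
  moreover have "{c \<in> E. v \<in> c} \<subseteq> edges_below w"
    using edges_at_vertex_subset_edges_below[OF assms(3) v] .
  moreover have "is_path E ps" "hd ps = v" "2 \<le> length ps" "ps ! 1 = parent v"
    using is_path_take[OF is_path_root_path[OF v(1)]] hd_root_path[OF v(1)]
      root_path_not_Nil[OF v(1)] len
    by (auto simp: ps_def parent_def)
  ultimately show ?thesis
    using consistent_at_if_consistent_subgraph[OF edges_below_subset assms(4) _ is_path_subgraph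
        _ _ _ _ assms(5)]
    by simp
qed

lemma consistent_at_if_consistent_T_plus:
  assumes w: "w \<in> verts E" "w \<noteq> \<rho>" and "\<not> ancestor w v" "interior_vertex E \<rho> v"
    and "consistent (insert {w, parent w} (E - edges_below w)) \<rho> h"
  shows "consistent_at h v"
proof -
  let ?F = "insert {w, parent w} (E - edges_below w)"
  have v: "v \<in> verts E" "v \<noteq> \<rho>" using interior_vertexD[OF assms(4)] by auto
  have F: "?F \<subseteq> E" using parent_edge_in_edges[OF w] by blast
  have "path_edges (root_path v) \<subseteq> ?F"
  proof
    fix c assume "c \<in> path_edges (root_path v)"
    then obtain y where y: "y \<in> set (root_path v)" "y \<noteq> \<rho>" "c = {y, parent y}"
      unfolding path_edges_root_path[OF v(1)] by blast
    have "y \<in> verts E"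
      using y(1) is_path_in_verts[OF is_path_root_path[OF v(1)]] by blast
    moreover have "\<not> ancestor w y"
      using assms(3) ancestor_trans[OF _ _ v(1)] y(1) by (auto simp: ancestor_def)
    ultimately have "c \<notin> edges_below w" "c \<in> E"
      using y(2,3) edges_below_iff parent_edge_in_edges by auto
    then show "c \<in> ?F" by simp
  qed
  then have "is_path ?F (root_path v)"
    using is_path_subgraph[OF is_path_root_path[OF v(1)] length_root_path_ge_2[OF v]] by blast
  moreover have "{c \<in> E. v \<in> c} \<subseteq> ?F"
  proof
    fix c assume "c \<in> {c \<in> E. v \<in> c}"
    then show "c \<in> ?F"
      using edge_at_vertex_in_edges_below[OF assms(3) v, of c] by (cases "c \<in> edges_below w") auto
  qed
  ultimately show ?thesis
    using consistent_at_if_consistent_subgraph[OF F assms(4) _ _ hd_root_path[OF v(1)]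
        last_root_path[OF v(1)]
        length_root_path_ge_2[OF v] _ assms(5)]
    by (simp add: parent_def)
qed

definition consistent_below :: "('v set \<Rightarrow> 'g::ab_group_add) \<Rightarrow> 'v \<Rightarrow> bool" where
  "consistent_below h x \<longleftrightarrow> (\<forall>v. ancestor x v \<and> interior_vertex E \<rho> v \<longrightarrow> consistent_at h v)"

lemma consistent_below_cong:
  assumes "\<forall>c\<in>edges_below x. h' c = h c"
  shows "consistent_below h' x \<longleftrightarrow> consistent_below h x"
proof -
  have "consistent_at h' v \<longleftrightarrow> consistent_at h v" if "ancestor x v" "interior_vertex E \<rho> v" for v
    using interior_vertexD[OF that(2)] edges_at_vertex_subset_edges_below[OF that(1)] assms
    by (intro consistent_at_cong) auto
  then show ?thesis
    unfolding consistent_below_def by blast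
qed

lemma consistent_below_if_consistent_edges_below:
  assumes "w \<in> verts E" "w \<noteq> \<rho>" "consistent (edges_below w) (parent w) h"
  shows "consistent_below h w"
  using consistent_at_if_consistent_edges_below[OF assms(1,2) _ _ assms(3)]
  unfolding consistent_below_def by blast

lemma consistent_below_if_children:
  assumes "x \<in> verts E" "interior_vertex E \<rho> x \<Longrightarrow> consistent_at h x"
    and "\<forall>z\<in>children x. consistent_below h z"
  shows "consistent_below h x"
  unfolding consistent_below_def
proof (intro allI impI, elim conjE)
  fix v assume v: "ancestor x v" "interior_vertex E \<rho> v"
  show "consistent_at h v"
  proof (cases "v = x")
    case True
    then show ?thesis using assms(2) v(2) by simp
  next
    case False
    then obtain z where "z \<in> children x" "ancestor z v"
      using ancestor_obtain_child[OF v(1)] interior_vertexD[OF v(2)] by blast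
    then show ?thesis using assms(3) v(2) unfolding consistent_below_def by blast
  qed
qed

definition relabels_below ::
    "('g::ab_group_add \<Rightarrow> 'l) \<Rightarrow> 'v \<Rightarrow> 'g \<Rightarrow> ('v set \<Rightarrow> 'g) \<Rightarrow> ('v set \<Rightarrow> 'g) \<Rightarrow> bool" where
  "relabels_below L x g h h' \<longleftrightarrow> consistent_below h' x \<and> (\<forall>c. L (h' c) = L (h c)) \<and>
     h' {x, parent x} = g \<and> (\<forall>c. c \<notin> edges_below x \<longrightarrow> h' c = h c)"

lemma relabels_below_leaf:
  assumes "x \<in> verts E" "x \<noteq> \<rho>" "\<not> interior_vertex E \<rho> x" "consistent_below h x"
    and "L g = L (h {x, parent x})"
  shows "relabels_below L x g h (h({x, parent x} := g))"
proof -
  have "consistent_at (h({x, parent x} := g)) v" if v: "ancestor x v" "interior_vertex E \<rho> v" for v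
  proof -
    have v': "v \<in> verts E" "v \<noteq> \<rho>" "v \<noteq> x" using v assms(3) interior_vertexD by auto
    moreover have "v \<noteq> parent x" using v(1) not_ancestor_parent[OF assms(1,2)] by auto
    ultimately have "(h({x, parent x} := g)) c = h c" if "v \<in> c" for c
      using that by auto
    moreover have "consistent_at h v"
      using assms(4) v unfolding consistent_below_def by blast
    ultimately show ?thesis
      using consistent_at_cong[OF v'(1,2), of "h({x, parent x} := g)" h] by blast
  qed
  then show ?thesis
    using assms(5) parent_edge_in_edges_below[OF assms(1,2)]
    unfolding relabels_below_def consistent_below_def by auto
qed

lemma some_child_edges_below:
  assumes "z \<in> children x" "c \<in> edges_below z"
  shows "(SOME z. z \<in> children x \<and> c \<in> edges_below z) = z"
proof (rule some_equality)
  show "z \<in> children x \<and> c \<in> edges_below z" using assms ..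
next
  fix z' assume "z' \<in> children x \<and> c \<in> edges_below z'"
  then show "z' = z" using edges_below_children_disjoint assms by blast
qed

lemma merge_below_children:
  assumes x: "x \<in> verts E" "x \<noteq> \<rho>" and "L g = L (h {x, parent x})"
    and H: "\<forall>z\<in>children x. (\<forall>c. L (H z c) = L (h c)) \<and> (\<forall>c. c \<notin> edges_below z \<longrightarrow> H z c = h c)"
  obtains h' where "h' {x, parent x} = g" "\<forall>z\<in>children x. \<forall>c\<in>edges_below z. h' c = H z c"
    "\<forall>c. L (h' c) = L (h c)" "\<forall>c. c \<notin> edges_below x \<longrightarrow> h' c = h c"
proof -
  define h' where "h' c = (if c = {x, parent x} then g else if \<exists>z\<in>children x. c \<in> edges_below z
      then H (SOME z. z \<in> children x \<and> c \<in> edges_below z) c else h c)" for c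
  have child: "h' c = H z c" if "z \<in> children x" "c \<in> edges_below z" for z c
  proof -
    have "(SOME z. z \<in> children x \<and> c \<in> edges_below z) = z"
      using some_child_edges_below[OF that] .
    moreover have "c \<noteq> {x, parent x}"
      using parent_edge_notin_edges_below_child[OF that(1) x(2)] that(2) by blast
    moreover have "\<exists>z\<in>children x. c \<in> edges_below z" using that by blast
    ultimately show ?thesis by (simp add: h'_def)
  qed
  have other: "h' c = h c" if "c \<noteq> {x, parent x}" "\<forall>z\<in>children x. c \<notin> edges_below z" for c
    using that by (simp add: h'_def)
  have "h' {x, parent x} = g" by (simp add: h'_def)
  moreover have "\<forall>z\<in>children x. \<forall>c\<in>edges_below z. h' c = H z c"
    using child by blast
  moreover have "\<forall>c. L (h' c) = L (h c)"
  proof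
    fix c
    consider "c = {x, parent x}" | z where "z \<in> children x" "c \<in> edges_below z"
      | "c \<noteq> {x, parent x}" "\<forall>z\<in>children x. c \<notin> edges_below z"
      by blast
    then show "L (h' c) = L (h c)"
    proof cases
      case 1
      then show ?thesis using assms(3) by (simp add: h'_def)
    next
      case (2 z)
      then show ?thesis using child H by simp
    next
      case 3
      then show ?thesis using other by simp
    qed
  qed
  moreover have "\<forall>c. c \<notin> edges_below x \<longrightarrow> h' c = h c"
  proof (intro allI impI)
    fix c assume c: "c \<notin> edges_below x"
    then have "c \<noteq> {x, parent x}" using parent_edge_in_edges_below[OF x] by blast
    moreover have "\<forall>z\<in>children x. c \<notin> edges_below z" using c edges_below_child_subset by blast
    ultimately show "h' c = h c" by (rule other)
  qed
  ultimately show thesis by (rule that)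
qed

lemma relabels_below_step:
  assumes x: "interior_vertex E \<rho> x" and G: "sum G (child_edges E \<rho> x) = g"
    and H: "\<forall>z\<in>children x. relabels_below L z (G {z, parent z}) h (H z)"
    and "L g = L (h {x, parent x})"
  shows "\<exists>h'. relabels_below L x g h h'"
proof -
  have xV: "x \<in> verts E" "x \<noteq> \<rho>" using interior_vertexD[OF x] by auto
  have "\<forall>z\<in>children x. (\<forall>c. L (H z c) = L (h c)) \<and> (\<forall>c. c \<notin> edges_below z \<longrightarrow> H z c = h c)"
    using H unfolding relabels_below_def by blast
  then obtain h' where h'_e: "h' {x, parent x} = g"
      and h'_child: "\<forall>z\<in>children x. \<forall>c\<in>edges_below z. h' c = H z c"
      and h'_labels: "\<forall>c. L (h' c) = L (h c)" and h'_other: "\<forall>c. c \<notin> edges_below x \<longrightarrow> h' c = h c"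
    by (rule merge_below_children[where L = L and g = g and h = h, OF xV assms(4)])
  have "sum h' (child_edges E \<rho> x) = sum G (child_edges E \<rho> x)"
  proof (rule sum.cong)
    fix c assume "c \<in> child_edges E \<rho> x"
    then obtain z where z: "z \<in> children x" "c = {z, parent z}"
      using child_edges_iff[OF xV] by blast
    then have "c \<in> edges_below z"
      using parent_edge_in_edges_below unfolding children_def by blast
    then show "h' c = G c"
      using h'_child z H unfolding relabels_below_def by simp
  qed simp
  then have "consistent_at h' x"
    using G h'_e by (simp add: consistent_at_def)
  moreover have "consistent_below h' z" if "z \<in> children x" for z
  proof -
    have "consistent_below (H z) z" using H that unfolding relabels_below_def by blast
    moreover have "\<forall>c\<in>edges_below z. h' c = H z c" using h'_child that by blast
    ultimately show ?thesis using consistent_below_cong by blast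
  qed
  ultimately have "consistent_below h' x"
    using consistent_below_if_children[OF xV(1)] by blast
  then have "relabels_below L x g h h'"
    using h'_e h'_labels h'_other unfolding relabels_below_def by blast
  then show ?thesis by blast
qed

lemma relabels_below_exists:
  fixes L :: "'g::ab_group_add \<Rightarrow> 'l"
  assumes "friendly L"
  shows "x \<in> verts E \<Longrightarrow> x \<noteq> \<rho> \<Longrightarrow> consistent_below h x \<Longrightarrow> L g = L (h {x, parent x}) \<Longrightarrow>
    \<exists>h'. relabels_below L x g h h'"
proof (induction "card (verts E) - length (root_path x)" arbitrary: x g rule: less_induct)
  case less
  show ?case
  proof (cases "interior_vertex E \<rho> x")
    case False
    then show ?thesis using relabels_below_leaf less.prems by blast
  next
    case True
    have "L g = L (sum h (child_edges E \<rho> x))"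
      using less.prems True unfolding consistent_below_def consistent_at_def
      by (metis ancestor_refl)
    then obtain G where G: "\<forall>c\<in>child_edges E \<rho> x. L (G c) = L (h c)" "sum G (child_edges E \<rho> x) = g"
      using friendly_lift_sum[OF assms finite_child_edges child_edges_nonempty[OF True]] by metis
    have "\<exists>h'. relabels_below L z (G {z, parent z}) h h'" if z: "z \<in> children x" for z
    proof -
      have zV: "z \<in> verts E" "z \<noteq> \<rho>" "parent z = x" using z unfolding children_def by auto
      have "card (verts E) - length (root_path z) < card (verts E) - length (root_path x)"
        using length_root_path_parent[OF zV(1,2)] length_root_path_le_card[OF zV(1)] zV(3) by simp
      moreover have "consistent_below h z"
        using less.prems(3) ancestor_trans[OF ancestor_child[OF z]] unfolding consistent_below_def
        by (meson interior_vertexD)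
      moreover have "L (G {z, parent z}) = L (h {z, parent z})"
        using G(1) child_edges_iff[OF less.prems(1,2)] z by blast
      ultimately show ?thesis using less.hyps zV(1,2) by blast
    qed
    then obtain H where "\<forall>z\<in>children x. relabels_below L z (G {z, parent z}) h (H z)"
      by metis
    then show ?thesis
      using relabels_below_step[OF True G(2)] less.prems(4) by blast
  qed
qed

lemma consistent_if_consistent_below_T_plus:
  assumes w: "w \<in> verts E" "w \<noteq> \<rho>" and "consistent_below h w"
    and "consistent (insert {w, parent w} (E - edges_below w)) \<rho> h2"
    and "\<forall>c. c \<notin> edges_below w \<longrightarrow> h c = h2 c" "h {w, parent w} = h2 {w, parent w}"
  shows "consistent E \<rho> h"
  unfolding consistent_iff_consistent_at
proof (intro allI impI)
  fix v assume v: "interior_vertex E \<rho> v"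
  show "consistent_at h v"
  proof (cases "ancestor w v")
    case True
    then show ?thesis using assms(3) v unfolding consistent_below_def by blast
  next
    case False
    have vV: "v \<in> verts E" "v \<noteq> \<rho>" using interior_vertexD[OF v] by auto
    have "h c = h2 c" if "c \<in> E" "v \<in> c" for c
      using edge_at_vertex_in_edges_below[OF False vV that] assms(5,6)
        by (cases "c \<in> edges_below w") auto
    then show ?thesis
      using consistent_at_if_consistent_T_plus[OF w False v assms(4)] consistent_at_cong[OF vV]
        by blast
  qed
qed

lemma glue_in_im_lab:
  fixes L :: "'g::ab_group_add \<Rightarrow> 'l"
  assumes "friendly L" and w: "w \<in> verts E" "w \<noteq> \<rho>"
    and "lm \<in> im_lab (edges_below w) (parent w) L"
    and "n \<in> im_lab (insert {w, parent w} (E - edges_below w)) \<rho> L"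
    and "lm {w, parent w} = n {w, parent w}"
  shows "glue E (edges_below w) lm n \<in> im_lab E \<rho> L"
proof -
  let ?e = "{w, parent w}"
  obtain h1 :: "'v set \<Rightarrow> 'g" where h1: "consistent (edges_below w) (parent w) h1"
      "lm = restrict (L \<circ> h1) (edges_below w)"
    using assms(4) unfolding im_lab_def by blast
  obtain h2 :: "'v set \<Rightarrow> 'g" where h2: "consistent (insert ?e (E - edges_below w)) \<rho> h2"
      "n = restrict (L \<circ> h2) (insert ?e (E - edges_below w))"
    using assms(5) unfolding im_lab_def by blast
  define h0 where "h0 c = (if c \<in> edges_below w then h1 c else h2 c)" for c
  have "consistent_below h0 w"
    using consistent_below_if_consistent_edges_below[OF w h1(1)] consistent_below_cong[of w h0 h1]
    by (simp add: h0_def)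
  moreover have "L (h2 ?e) = L (h0 ?e)"
    using assms(6) h1(2) h2(2) parent_edge_in_edges_below[OF w] by (simp add: h0_def)
  ultimately obtain h' where h': "relabels_below L w (h2 ?e) h0 h'"
    using relabels_below_exists[OF assms(1) w] by metis
  then have "consistent E \<rho> h'"
    using consistent_if_consistent_below_T_plus[OF w _ h2(1)] unfolding relabels_below_def
    by (simp add: h0_def)
  moreover have "glue E (edges_below w) lm n = restrict (L \<circ> h') E"
  proof
    fix c
    have "L (h' c) = L (h0 c)" and "c \<notin> edges_below w \<Longrightarrow> h' c = h0 c"
      using h' unfolding relabels_below_def by auto
    then show "glue E (edges_below w) lm n c = restrict (L \<circ> h') E c"
      using h1(2) h2(2) by (auto simp: glue_def h0_def)
  qed
  ultimately show ?thesis
    unfolding im_lab_def by blast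
qed

end

theorem lemma4p4:
  fixes L :: "'g::{ab_group_add,finite} \<Rightarrow> 'l::finite"
    and E :: "'v set set" and \<rho> :: 'v and e :: "'v set"
  assumes "friendly L" and "rooted_tree E \<rho>" and "interior_edge E \<rho> e"
  shows
   "(\<forall>d lm lm' n.
      (\<forall>i<d. lm i \<in> im_lab (T_minus E \<rho> e) (near_end E \<rho> e) L
           \<and> lm' i \<in> im_lab (T_minus E \<rho> e) (near_end E \<rho> e) L
           \<and> lm' i e = lm i e
           \<and> n i \<in> im_lab (T_plus E \<rho> e) \<rho> L \<and> n i e = lm i e)
      \<and> binom d lm lm' \<in> toric_ideal (T_minus E \<rho> e) (near_end E \<rho> e) L
      \<longrightarrow> (\<forall>i<d. glue E (T_minus E \<rho> e) (lm i) (n i) \<in> im_lab E \<rho> L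
                \<and> glue E (T_minus E \<rho> e) (lm' i) (n i) \<in> im_lab E \<rho> L)
        \<and> binom d (\<lambda>i. glue E (T_minus E \<rho> e) (lm i) (n i))
                  (\<lambda>i. glue E (T_minus E \<rho> e) (lm' i) (n i)) \<in> toric_ideal E \<rho> L)
  \<and> (\<forall>d n n' lm.
      (\<forall>i<d. n i \<in> im_lab (T_plus E \<rho> e) \<rho> L
           \<and> n' i \<in> im_lab (T_plus E \<rho> e) \<rho> L
           \<and> n' i e = n i e
           \<and> lm i \<in> im_lab (T_minus E \<rho> e) (near_end E \<rho> e) L \<and> lm i e = n i e)
      \<and> binom d n n' \<in> toric_ideal (T_plus E \<rho> e) \<rho> L
      \<longrightarrow> (\<forall>i<d. glue E (T_minus E \<rho> e) (lm i) (n i) \<in> im_lab E \<rho> L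
                \<and> glue E (T_minus E \<rho> e) (lm i) (n' i) \<in> im_lab E \<rho> L)
        \<and> binom d (\<lambda>i. glue E (T_minus E \<rho> e) (lm i) (n i))
                  (\<lambda>i. glue E (T_minus E \<rho> e) (lm i) (n' i)) \<in> toric_ideal E \<rho> L)"
proof -
  interpret tree_with_root E \<rho> by (rule tree_with_root.intro) (rule assms(2))
  obtain w where w: "w \<in> verts E" "w \<noteq> \<rho>" and e: "e = {w, parent w}"
    using assms(3) edge_lower_end unfolding interior_edge_def by blast
  have lower: "T_minus E \<rho> e = edges_below w" and root: "near_end E \<rho> e = parent w"
    and upper: "T_plus E \<rho> e = insert e (E - edges_below w)"
    using T_minus_eq[OF w] near_end_eq[OF w] unfolding e T_plus_def by simp_all
  have glue: "glue E (edges_below w) lm n \<in> im_lab E \<rho> L"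
    if "lm \<in> im_lab (edges_below w) (parent w) L" "n \<in> im_lab (insert e (E - edges_below w)) \<rho> L"
      "lm e = n e" for lm n
    using glue_in_im_lab[OF assms(1) w] that unfolding e by blast
  have "e \<in> edges_below w" using parent_edge_in_edges_below[OF w] e by simp
  show ?thesis
    unfolding lower root upper
  proof ((rule conjI; intro allI impI; elim conjE), goal_cases)
    case (1 d lm lm' n)
    then have "\<forall>i<d. glue E (edges_below w) (lm i) (n i) \<in> im_lab E \<rho> L
        \<and> glue E (edges_below w) (lm' i) (n i) \<in> im_lab E \<rho> L"
      using glue by simp
    with 1 show ?case
      using binom_glue_lower_in_toric_ideal[OF finite_edges edges_below_subset] by blast
  next
    case (2 d n n' lm)
    then have "\<forall>i<d. glue E (edges_below w) (lm i) (n i) \<in> im_lab E \<rho> L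
        \<and> glue E (edges_below w) (lm i) (n' i) \<in> im_lab E \<rho> L"
      using glue by simp
    moreover have "\<forall>i<d. lm i e = n i e \<and> lm i e = n' i e" using 2 by simp
    ultimately show ?case
      using 2 binom_glue_upper_in_toric_ideal[OF finite_edges edges_below_subset \<open>e \<in> edges_below w\<close>]
      by blast
  qed
qed

end
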